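(* Let $f:\mathbb{R}^d\times\mathcal{X}\to\mathbb{R}$ be differentiable in $\theta$, with $\mathcal{X}$ a subset of a Euclidean space, $\sup_{x\in\mathcal{X}}\Vert x\Vert\le D<\infty$ and $\sup_{x\in\mathcal{X}}\Vert\nabla f(0,x)\Vert\le E<\infty$. Assume (A1): there are $K_1,K_2>0$ with $\Vert\nabla f(\theta,x)-\nabla f(\hat\theta,\hat x)\Vert\le K_1\Vert\theta-\hat\theta\Vert+K_2\Vert x-\hat x\Vert(\Vert\theta\Vert+\Vert\hat\theta\Vert+1)$ for all $\theta,\hat\theta\in\mathbb{R}^d$, $x,\hat x\in\mathcal{X}$; (A3): there are $m>0,K>0$ with $\langle\nabla f(\theta_1,x)-\nabla f(\theta_2,x),\theta_1-\theta_2\rangle\ge m\Vert\theta_1-\theta_2\Vert^2-K$ for all $\theta_1,\theta_2,x$. Let $X_n=(x_1,\dots,x_n)$, $\hat X_n=(\hat x_1,\dots,\hat x_n)\in\mathcal{X}^n$ differ in at most one index, $b\in\{1,\dots,n\}$, $(\Omega_k)$ i.i.d. uniformly random $b$-subsets of $\{1,\dots,n\}$, and $$\theta_k=\theta_{k-1}-\tfrac\eta b\textstyle\sum_{i\in\Omega_k}\nabla f(\theta_{k-1},x_i),\qquad\hat\theta_k=\hat\theta_{k-1}-\tfrac\eta b\sum_{i\in\Omega_k}\nabla f(\hat\theta_{k-1},\hat x_i),$$ with $\theta_0=\hat\theta_0=\theta\in\mathbb{R}^d$. Assume $\eta<\min\left\{\frac1m,\frac{m}{K_1^2+64D^2K_2^2}\right\}$.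 Let $\nu_k,\hat\nu_k$ be the laws of $\theta_k,\hat\theta_k$, let $r:=\frac{E+\sqrt{E^2+4mK}}{2m}$ and $$B:=4\Vert\theta\Vert^2+4r^2+4-\frac{2\eta}{m}K_1^2-\frac{112\eta}{m}D^2K_2^2+\frac{128\eta}{m}D^2K_2^2r^2+\frac{4K}{m}+2r^2.$$ Then for all $k$, $$\mathcal{W}_2^2(\nu_k,\hat\nu_k)\le\left(1-(1-\eta m)^k\right)\left(\frac{4D^2K_2^2\eta(8B+2)}{bnm}+\frac{4K_2D(1+K_1\eta)}{nm}(1+5B)+\frac{2K}{m}\right).$$
   Context: $\mathcal{W}_2$ is the 2-Wasserstein distance: $\mathcal{W}_2(\mu,\nu)^2=\inf\mathbb{E}\Vert X-Y\Vert^2$ over couplings of $X\sim\mu$, $Y\sim\nu$. *)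

theory Defs
  imports "HOL-Probability.Probability"
begin

definition W2sq :: "'a::euclidean_space measure \<Rightarrow> 'a measure \<Rightarrow> ennreal" where
  "W2sq \<mu> \<nu> =
     (INF \<pi> \<in> {\<pi> :: ('a \<times> 'a) measure.
              sets \<pi> = sets borel \<and> prob_space \<pi> \<and>
              (\<forall>A \<in> sets (borel :: 'a measure).
                 emeasure \<pi> (A \<times> UNIV) = emeasure \<mu> A \<and>
                 emeasure \<pi> (UNIV \<times> A) = emeasure \<nu> A)}.
        \<integral>\<^sup>+ z. ennreal ((norm (fst z - snd z))\<^sup>2) \<partial>\<pi>)"

text \<open>All b-element subsets of the index set {0..<n} (indices shifted to start at 0).\<close>
definition minibatches :: "nat \<Rightarrow> nat \<Rightarrow> nat set set" where
  "minibatches n b = {S. S \<subseteq> {..<n} \<and> card S = b}"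

fun sgd_law :: "('a::euclidean_space \<Rightarrow> 'x \<Rightarrow> 'a) \<Rightarrow> (nat \<Rightarrow> 'x) \<Rightarrow> nat \<Rightarrow> nat \<Rightarrow> real \<Rightarrow> 'a
                 \<Rightarrow> nat \<Rightarrow> 'a pmf" where
  "sgd_law g xs n b \<eta> \<theta>0 0 = return_pmf \<theta>0"
| "sgd_law g xs n b \<eta> \<theta>0 (Suc k) =
     bind_pmf (sgd_law g xs n b \<eta> \<theta>0 k)
       (\<lambda>t. map_pmf (\<lambda>S. t - (\<eta> / real b) *\<^sub>R (\<Sum>i\<in>S. g t (xs i)))
              (pmf_of_set (minibatches n b)))"

end

theory Submission
  imports Defs
begin

text \<open>
  Run both chains with the same minibatches (a synchronous coupling); its mean squared distance
  bounds \<open>\<W>\<^sub>2\<^sup>2\<close>. With the data shared, an SGD step is a gradient step for the minibatch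
  average of the gradients, which is \<open>K\<^sub>1\<close>-Lipschitz and strongly monotone up to \<open>K\<close>, so it
  shrinks squared distances by the factor \<open>1 - \<eta>m\<close> up to an additive \<open>2\<eta>K\<close>. The one
  differing data point enters only when its index is drawn, i.e. with probability \<open>b/n\<close>, and
  then moves the averaged gradient at a point \<open>t\<close> by at most \<open>2DK\<^sub>2(2\<parallel>t\<parallel> + 1)/b\<close>.
  Started at \<open>\<theta>\<close>, every iterate stays in the ball of radius \<open>max \<parallel>\<theta>\<parallel> (2r)\<close>, whose
  squared radius is at most \<open>B\<close>, since \<open>2r\<close> is the larger root of \<open>m x\<^sup>2 - 2Ex - 4K\<close>.
  The coupled mean squared distance \<open>a\<^sub>k\<close> thus satisfies
  \<open>a\<^sub>k\<^sub>+\<^sub>1 \<le> (1 - \<eta>m) a\<^sub>k + \<eta>m C\<close> with \<open>C\<close> the bound of the theorem, whence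
  \<open>a\<^sub>k \<le> (1 - (1 - \<eta>m)\<^sup>k) C\<close>.
\<close>

section \<open>Couplings and the Wasserstein distance\<close>

lemma W2sq_le_pmf_coupling:
  fixes p :: "('a::euclidean_space \<times> 'a) pmf"
  shows "W2sq (map_pmf fst p) (map_pmf snd p) \<le> (\<integral>\<^sup>+ z. ennreal ((norm (fst z - snd z))\<^sup>2) \<partial>p)"
proof -
  define \<pi> where "\<pi> = distr p (borel :: ('a \<times> 'a) measure) (\<lambda>z. z)"
  have id_meas: "(\<lambda>z. z) \<in> measurable p (borel :: ('a \<times> 'a) measure)"
    by simp
  have "prob_space \<pi>"
    unfolding \<pi>_def by (rule measure_pmf.prob_space_distr[OF id_meas])
  moreover have "emeasure \<pi> (A \<times> UNIV) = emeasure (map_pmf fst p) A \<and>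
      emeasure \<pi> (UNIV \<times> A) = emeasure (map_pmf snd p) A"
    if "A \<in> sets (borel :: 'a measure)" for A
    using that unfolding \<pi>_def
    by (simp add: emeasure_distr[OF id_meas] borel_Times vimage_fst vimage_snd)
  ultimately have "W2sq (map_pmf fst p) (map_pmf snd p) \<le> (\<integral>\<^sup>+ z. ennreal ((norm (fst z - snd z))\<^sup>2) \<partial>\<pi>)"
    unfolding W2sq_def by (intro INF_lower) (simp add: \<pi>_def)
  also have "\<dots> = (\<integral>\<^sup>+ z. ennreal ((norm (fst z - snd z))\<^sup>2) \<partial>p)"
    unfolding \<pi>_def
    by (subst nn_integral_distr[OF id_meas]) (auto intro!: borel_measurable_continuous_onI continuous_intros)
  finally show ?thesis .
qed

lemma nn_integral_pmf_of_set_ennreal: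
  assumes "finite A" "A \<noteq> {}" "\<And>x. x \<in> A \<Longrightarrow> 0 \<le> f x"
  shows "(\<integral>\<^sup>+ x. ennreal (f x) \<partial>pmf_of_set A) = ennreal ((\<Sum>x\<in>A. f x) / card A)"
  using assms
  by (simp add: nn_integral_pmf_of_set ennreal_of_nat_eq_real_of_nat divide_ennreal sum_nonneg
      card_gt_0_iff)

lemma ennreal_geometric_recurrence_le:
  fixes a :: "nat \<Rightarrow> ennreal"
  assumes "a 0 = 0" and step: "\<And>k. a (Suc k) \<le> ennreal q * a k + ennreal ((1 - q) * C)"
    and "0 \<le> q" "q \<le> 1" "0 \<le> C"
  shows "a k \<le> ennreal ((1 - q ^ k) * C)"
proof (induction k)
  case 0
  then show ?case
    using assms(1) by simp
next
  case (Suc k)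
  have "a (Suc k) \<le> ennreal q * ennreal ((1 - q ^ k) * C) + ennreal ((1 - q) * C)"
    using step[of k] Suc.IH by (meson add_right_mono mult_left_mono order_trans zero_le)
  also have "\<dots> = ennreal (q * ((1 - q ^ k) * C) + (1 - q) * C)"
    using assms(3-5) power_le_one[of q k] by (simp add: ennreal_mult ennreal_plus)
  also have "q * ((1 - q ^ k) * C) + (1 - q) * C = (1 - q ^ Suc k) * C"
    by (simp add: algebra_simps)
  finally show ?case .
qed

section \<open>Uniform minibatches\<close>

lemma finite_minibatches: "finite (minibatches n b)"
  unfolding minibatches_def by (rule finite_subset[of _ "Pow {..<n}"]) auto

lemma minibatches_nonempty: "b \<le> n \<Longrightarrow> minibatches n b \<noteq> {}"
  unfolding minibatches_def by (auto intro!: exI[of _ "{..<b}"])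

lemma card_minibatches: "card (minibatches n b) = n choose b"
  unfolding minibatches_def by (simp add: n_subsets)

lemma card_minibatches_containing:
  assumes "j < n"
  shows "card {S \<in> minibatches n b. j \<in> S} * n = b * card (minibatches n b)"
proof (cases "b = 0")
  case True
  then show ?thesis
    by (auto simp: minibatches_def card_eq_0_iff dest: finite_subset[OF _ finite_lessThan])
next
  case False
  have "bij_betw (insert j) {T. T \<subseteq> {..<n} - {j} \<and> card T = b - 1} {S \<in> minibatches n b. j \<in> S}"
  proof (rule bij_betw_byWitness[where f'="\<lambda>S. S - {j}"])
    show "insert j ` {T. T \<subseteq> {..<n} - {j} \<and> card T = b - 1} \<subseteq> {S \<in> minibatches n b. j \<in> S}"
      using assms False by (auto simp: minibatches_def finite_subset card_insert_if)
    show "(\<lambda>S. S - {j}) ` {S \<in> minibatches n b. j \<in> S} \<subseteq> {T. T \<subseteq> {..<n} - {j} \<and> card T = b - 1}"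
      by (auto simp: minibatches_def finite_subset)
  qed auto
  then have "card {S \<in> minibatches n b. j \<in> S} = (n - 1) choose (b - 1)"
    using assms by (simp add: bij_betw_same_card[symmetric] n_subsets)
  then show ?thesis
    using times_binomial_minus1_eq[of b n] False by (simp add: card_minibatches mult.commute)
qed

lemma sum_card_Int_minibatches:
  assumes "J \<subseteq> {..<n}"
  shows "(\<Sum>S\<in>minibatches n b. card (S \<inter> J)) * n = b * card (minibatches n b) * card J"
proof -
  have "finite J"
    using assms finite_subset by blast
  have "(\<Sum>S\<in>minibatches n b. card (S \<inter> J)) = (\<Sum>S\<in>minibatches n b. \<Sum>j\<in>J. if j \<in> S then 1 else 0)"
    using \<open>finite J\<close> by (simp add: sum.If_cases Int_commute)
  also have "\<dots> = (\<Sum>j\<in>J. card {S \<in> minibatches n b. j \<in> S})"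
    using finite_minibatches by (subst sum.swap) (simp add: sum.If_cases Int_def)
  finally show ?thesis
    using assms by (simp add: sum_distrib_right card_minibatches_containing subset_iff)
qed

section \<open>Gradient steps for Lipschitz, almost strongly monotone fields\<close>

definition strongly_monotone_up_to :: "real \<Rightarrow> real \<Rightarrow> ('a::real_inner \<Rightarrow> 'a) \<Rightarrow> bool" where
  "strongly_monotone_up_to m K G \<longleftrightarrow> (\<forall>t t'. (G t - G t') \<bullet> (t - t') \<ge> m * (norm (t - t'))\<^sup>2 - K)"

lemma norm_diff_scaleR_sq:
  fixes d a :: "'a::real_inner"
  shows "(norm (d - c *\<^sub>R a))\<^sup>2 = (norm d)\<^sup>2 - 2 * c * (a \<bullet> d) + c\<^sup>2 * (norm a)\<^sup>2"
  unfolding power2_norm_eq_inner by (simp add: inner_diff_left inner_diff_right inner_commute power2_eq_square)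

lemma gradient_step_dist_sq_le:
  fixes G :: "'a::real_inner \<Rightarrow> 'a"
  assumes lip: "L-lipschitz_on UNIV G" and mono: "strongly_monotone_up_to m K G"
    and "0 \<le> \<eta>" "\<eta> * L\<^sup>2 \<le> m"
  shows "(norm ((t - \<eta> *\<^sub>R G t) - (t' - \<eta> *\<^sub>R G t')))\<^sup>2 \<le> (1 - \<eta> * m) * (norm (t - t'))\<^sup>2 + 2 * \<eta> * K"
proof -
  define d where "d = t - t'"
  define a where "a = G t - G t'"
  have "(norm a)\<^sup>2 \<le> (L * norm d)\<^sup>2"
    using lipschitz_on_normD[OF lip, of t t'] by (simp add: a_def d_def power_mono)
  then have "\<eta>\<^sup>2 * (norm a)\<^sup>2 \<le> \<eta>\<^sup>2 * (L * norm d)\<^sup>2"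
    by (simp add: mult_left_mono)
  also have "\<dots> = \<eta> * (\<eta> * L\<^sup>2) * (norm d)\<^sup>2"
    by (simp add: power_mult_distrib power2_eq_square mult_ac)
  also have "\<dots> \<le> \<eta> * m * (norm d)\<^sup>2"
    using assms(3,4) by (intro mult_right_mono mult_left_mono) simp_all
  finally have "\<eta>\<^sup>2 * (norm a)\<^sup>2 \<le> \<eta> * m * (norm d)\<^sup>2" .
  moreover have "\<eta> * (m * (norm d)\<^sup>2 - K) \<le> \<eta> * (a \<bullet> d)"
    using mono assms(3) unfolding strongly_monotone_up_to_def a_def d_def by (intro mult_left_mono) simp_all
  moreover have "(t - \<eta> *\<^sub>R G t) - (t' - \<eta> *\<^sub>R G t') = d - \<eta> *\<^sub>R a"
    by (simp add: a_def d_def algebra_simps)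
  ultimately show ?thesis
    by (simp add: norm_diff_scaleR_sq flip: d_def) (simp add: algebra_simps)
qed

lemma gradient_step_dist_le:
  fixes G :: "'a::real_normed_vector \<Rightarrow> 'a"
  assumes lip: "L-lipschitz_on UNIV G" and "0 \<le> \<eta>"
  shows "norm ((t - \<eta> *\<^sub>R G t) - (t' - \<eta> *\<^sub>R G t')) \<le> (1 + \<eta> * L) * norm (t - t')"
proof -
  have "(t - \<eta> *\<^sub>R G t) - (t' - \<eta> *\<^sub>R G t') = (t - t') - \<eta> *\<^sub>R (G t - G t')"
    by (simp add: algebra_simps)
  then have "norm ((t - \<eta> *\<^sub>R G t) - (t' - \<eta> *\<^sub>R G t')) \<le> norm (t - t') + norm (\<eta> *\<^sub>R (G t - G t'))"
    by (metis norm_triangle_ineq4)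
  also have "norm (\<eta> *\<^sub>R (G t - G t')) \<le> \<eta> * (L * norm (t - t'))"
    using lipschitz_on_normD[OF lip, of t t'] assms(2) by (simp add: mult_left_mono)
  finally show ?thesis
    by (simp add: algebra_simps)
qed

lemma gradient_step_norm_le:
  fixes G :: "'a::real_inner \<Rightarrow> 'a"
  assumes lip: "L-lipschitz_on UNIV G" and mono: "strongly_monotone_up_to m K G"
    and \<eta>: "0 \<le> \<eta>" "\<eta> * L\<^sup>2 \<le> m" "\<eta> * m \<le> 1"
    and "norm (G 0) \<le> E" "norm t \<le> M" and M: "2 * K \<le> m * M\<^sup>2 - 2 * E * M" "\<eta> * E \<le> M"
  shows "norm (t - \<eta> *\<^sub>R G t) \<le> M"
proof -
  have "(norm ((t - \<eta> *\<^sub>R G t) - (0 - \<eta> *\<^sub>R G 0)))\<^sup>2 \<le> (1 - \<eta> * m) * (norm t)\<^sup>2 + 2 * \<eta> * K"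
    using gradient_step_dist_sq_le[OF lip mono \<eta>(1,2), of t 0] by simp
  also have "\<dots> \<le> (1 - \<eta> * m) * M\<^sup>2 + 2 * \<eta> * K"
    using \<eta>(3) \<open>norm t \<le> M\<close> by (intro add_right_mono mult_left_mono power_mono) simp_all
  also have "\<dots> \<le> (M - \<eta> * E)\<^sup>2"
  proof -
    have "\<eta> * (2 * K) \<le> \<eta> * (m * M\<^sup>2 - 2 * E * M)"
      using M(1) \<eta>(1) by (rule mult_left_mono)
    then show ?thesis
      using zero_le_power2[of "\<eta> * E"] by (simp add: power2_eq_square algebra_simps)
  qed
  finally have "norm ((t - \<eta> *\<^sub>R G t) - (0 - \<eta> *\<^sub>R G 0)) \<le> M - \<eta> * E"
    by (rule power2_le_imp_le) (use M(2) in simp)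
  moreover have "norm (\<eta> *\<^sub>R G 0) \<le> \<eta> * E"
    using \<eta>(1) \<open>norm (G 0) \<le> E\<close> by (simp add: mult_left_mono)
  ultimately show ?thesis
    using norm_triangle_ineq[of "(t - \<eta> *\<^sub>R G t) - (0 - \<eta> *\<^sub>R G 0)" "- \<eta> *\<^sub>R G 0"] by simp
qed

section \<open>Elementary estimates for the constants\<close>

lemma quadratic_bounds_of_sq_le:
  fixes x y B :: real
  assumes "0 \<le> x" "0 \<le> y" "x\<^sup>2 \<le> B" "y\<^sup>2 \<le> B"
  shows "(x + y) * (2 * y + 1) \<le> 1 + 5 * B" and "(2 * y + 1)\<^sup>2 \<le> 8 * B + 2"
proof -
  have "2 * x * y \<le> x\<^sup>2 + y\<^sup>2" "2 * x \<le> x\<^sup>2 + 1" "2 * y \<le> y\<^sup>2 + 1" "4 * y \<le> 4 * y\<^sup>2 + 1"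
    using zero_le_power2[of "x - y"] zero_le_power2[of "x - 1"] zero_le_power2[of "y - 1"]
      zero_le_power2[of "2 * y - 1"]
    by (simp_all add: power2_diff power_mult_distrib)
  then show "(x + y) * (2 * y + 1) \<le> 1 + 5 * B" "(2 * y + 1)\<^sup>2 \<le> 8 * B + 2"
    using assms(3,4) by (simp_all add: power2_eq_square algebra_simps)
qed

lemma radius_conditions_of_ge_root:
  fixes E K m M \<eta> :: real
  assumes "0 < m" "0 \<le> K" "0 \<le> E" "0 \<le> \<eta>" "\<eta> * m \<le> 1"
    and root: "(E + sqrt (E\<^sup>2 + 4 * m * K)) / m \<le> M"
  shows "2 * K \<le> m * M\<^sup>2 - 2 * E * M" and "\<eta> * E \<le> M"
proof -
  define s where "s = sqrt (E\<^sup>2 + 4 * m * K)"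
  define \<rho> where "\<rho> = (E + s) / m"
  have "s\<^sup>2 = E\<^sup>2 + 4 * m * K" "E \<le> s"
    using assms(1-3) by (simp_all add: s_def real_le_rsqrt)
  have "m * \<rho> = E + s" "\<rho> \<le> M"
    using assms(1) root by (simp_all add: \<rho>_def s_def)
  have "m * \<rho>\<^sup>2 - 2 * E * \<rho> = \<rho> * (m * \<rho>) - 2 * E * \<rho>"
    by (simp add: power2_eq_square)
  also have "\<dots> = (E + s) * (s - E) / m"
    using assms(1) by (simp add: \<open>m * \<rho> = E + s\<close> \<rho>_def field_simps)
  also have "\<dots> = 4 * K"
    using \<open>s\<^sup>2 = E\<^sup>2 + 4 * m * K\<close> assms(1) by (simp add: power2_eq_square algebra_simps)
  finally have "m * \<rho>\<^sup>2 - 2 * E * \<rho> = 4 * K" .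
  moreover have "0 \<le> (M - \<rho>) * (m * (M + \<rho>) - 2 * E)"
  proof (rule mult_nonneg_nonneg)
    have "2 * E \<le> 2 * (m * \<rho>)"
      using \<open>m * \<rho> = E + s\<close> \<open>E \<le> s\<close> assms(3) by simp
    also have "\<dots> \<le> m * (M + \<rho>)"
      using mult_left_mono[OF \<open>\<rho> \<le> M\<close>, of m] assms(1) by (simp add: algebra_simps)
    finally show "0 \<le> m * (M + \<rho>) - 2 * E"
      by simp
  qed (use \<open>\<rho> \<le> M\<close> in simp)
  ultimately show "2 * K \<le> m * M\<^sup>2 - 2 * E * M"
    using assms(2) by (simp add: power2_eq_square algebra_simps)
  have "\<eta> * E = (\<eta> * m) * (E / m)"
    using assms(1) by simp
  also have "\<dots> \<le> E / m"
    using assms(1,3-5) by (intro mult_left_le_one_le) simp_all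
  also have "\<dots> \<le> \<rho>"
    using assms(1) \<open>E \<le> s\<close> assms(3) by (simp add: \<rho>_def divide_right_mono)
  finally show "\<eta> * E \<le> M"
    using \<open>\<rho> \<le> M\<close> by simp
qed

lemma max_radius_sq_le:
  fixes a r \<eta> m K K1 K2 D :: real
  assumes "0 < m" "0 \<le> K" "0 \<le> \<eta>" "\<eta> * K1\<^sup>2 \<le> m" "\<eta> * (64 * D\<^sup>2 * K2\<^sup>2) \<le> m"
  shows "(max a (2 * r))\<^sup>2 \<le> 4 * a\<^sup>2 + 4 * r\<^sup>2 + 4 - 2 * \<eta> / m * K1\<^sup>2
           - 112 * \<eta> / m * D\<^sup>2 * K2\<^sup>2 + 128 * \<eta> / m * D\<^sup>2 * K2\<^sup>2 * r\<^sup>2 + 4 * K / m + 2 * r\<^sup>2"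
proof -
  have "(max a (2 * r))\<^sup>2 \<le> a\<^sup>2 + 4 * r\<^sup>2"
    by (simp add: max_def power_mult_distrib)
  moreover have "2 * \<eta> / m * K1\<^sup>2 \<le> 2" "112 * \<eta> / m * D\<^sup>2 * K2\<^sup>2 \<le> 2"
    using assms(1,4,5) by (simp_all add: pos_divide_le_eq)
  moreover have "0 \<le> 128 * \<eta> / m * D\<^sup>2 * K2\<^sup>2 * r\<^sup>2" "0 \<le> 4 * K / m"
    using assms(1-3) by simp_all
  ultimately show ?thesis
    using zero_le_power2[of a] zero_le_power2[of r] by linarith
qed

lemma step_size_bounds:
  fixes \<eta> m K1 D K2 :: real
  assumes "\<eta> < min (1 / m) (m / (K1\<^sup>2 + 64 * D\<^sup>2 * K2\<^sup>2))" "0 < m" "0 < K1" "0 < \<eta>"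
  shows "\<eta> * m \<le> 1" "\<eta> * K1\<^sup>2 \<le> m" "\<eta> * (64 * D\<^sup>2 * K2\<^sup>2) \<le> m"
proof -
  have "0 < K1\<^sup>2 + 64 * D\<^sup>2 * K2\<^sup>2"
    using assms(3) by (simp add: add_pos_nonneg)
  then have "\<eta> * K1\<^sup>2 + \<eta> * (64 * D\<^sup>2 * K2\<^sup>2) < m"
    using assms(1) by (simp add: pos_less_divide_eq distrib_left mult.commute)
  moreover have "0 \<le> \<eta> * K1\<^sup>2" "0 \<le> \<eta> * (64 * D\<^sup>2 * K2\<^sup>2)"
    using assms(4) by simp_all
  ultimately show "\<eta> * K1\<^sup>2 \<le> m" "\<eta> * (64 * D\<^sup>2 * K2\<^sup>2) \<le> m"
    by linarith+
  show "\<eta> * m \<le> 1"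
    using assms(1,2) by (simp add: less_divide_eq mult.commute)
qed

section \<open>Stability of minibatch SGD\<close>

definition batch_grad ::
    "('a::real_vector \<Rightarrow> 'x \<Rightarrow> 'a) \<Rightarrow> (nat \<Rightarrow> 'x) \<Rightarrow> nat \<Rightarrow> nat set \<Rightarrow> 'a \<Rightarrow> 'a" where
  "batch_grad g xs b S t = (1 / real b) *\<^sub>R (\<Sum>i\<in>S. g t (xs i))"

definition sgd_step ::
    "('a::real_vector \<Rightarrow> 'x \<Rightarrow> 'a) \<Rightarrow> (nat \<Rightarrow> 'x) \<Rightarrow> nat \<Rightarrow> real \<Rightarrow> nat set \<Rightarrow> 'a \<Rightarrow> 'a" where
  "sgd_step g xs b \<eta> S t = t - \<eta> *\<^sub>R batch_grad g xs b S t"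

lemma sgd_law_Suc_sgd_step:
  "sgd_law g xs n b \<eta> \<theta> (Suc k) =
     bind_pmf (sgd_law g xs n b \<eta> \<theta> k)
       (\<lambda>t. map_pmf (\<lambda>S. sgd_step g xs b \<eta> S t) (pmf_of_set (minibatches n b)))"
  by (simp add: sgd_step_def batch_grad_def)

fun sgd_coupling ::
    "('a::euclidean_space \<Rightarrow> 'x \<Rightarrow> 'a) \<Rightarrow> (nat \<Rightarrow> 'x) \<Rightarrow> (nat \<Rightarrow> 'x) \<Rightarrow> nat \<Rightarrow> nat \<Rightarrow> real \<Rightarrow> 'a
      \<Rightarrow> nat \<Rightarrow> ('a \<times> 'a) pmf" where
  "sgd_coupling g xs xs' n b \<eta> \<theta> 0 = return_pmf (\<theta>, \<theta>)"
| "sgd_coupling g xs xs' n b \<eta> \<theta> (Suc k) =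
     bind_pmf (sgd_coupling g xs xs' n b \<eta> \<theta> k)
       (\<lambda>z. map_pmf (\<lambda>S. (sgd_step g xs b \<eta> S (fst z), sgd_step g xs' b \<eta> S (snd z)))
              (pmf_of_set (minibatches n b)))"

lemma map_fst_sgd_coupling: "map_pmf fst (sgd_coupling g xs xs' n b \<eta> \<theta> k) = sgd_law g xs n b \<eta> \<theta> k"
proof (induction k)
  case (Suc k)
  then show ?case
    by (simp add: sgd_law_Suc_sgd_step map_bind_pmf bind_map_pmf pmf.map_comp o_def flip: Suc.IH
             del: sgd_law.simps)
qed simp

lemma map_snd_sgd_coupling: "map_pmf snd (sgd_coupling g xs xs' n b \<eta> \<theta> k) = sgd_law g xs' n b \<eta> \<theta> k"
proof (induction k)
  case (Suc k)
  then show ?case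
    by (simp add: sgd_law_Suc_sgd_step map_bind_pmf bind_map_pmf pmf.map_comp o_def flip: Suc.IH
             del: sgd_law.simps)
qed simp

locale sgd_stability =
  fixes g :: "'a::euclidean_space \<Rightarrow> 'x::euclidean_space \<Rightarrow> 'a" and X :: "'x set"
    and D E K1 K2 m K \<eta> :: real and n b :: nat
  assumes norm_data_le: "\<And>x. x \<in> X \<Longrightarrow> norm x \<le> D"
    and norm_grad_zero_le: "\<And>x. x \<in> X \<Longrightarrow> norm (g 0 x) \<le> E"
    and grad_lipschitz: "\<And>t t' x x'. x \<in> X \<Longrightarrow> x' \<in> X \<Longrightarrow>
          norm (g t x - g t' x') \<le> K1 * norm (t - t') + K2 * norm (x - x') * (norm t + norm t' + 1)"
    and grad_strongly_monotone: "\<And>x. x \<in> X \<Longrightarrow> strongly_monotone_up_to m K (\<lambda>t. g t x)"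
    and D_nonneg: "0 \<le> D" and K1_nonneg: "0 \<le> K1" and K2_nonneg: "0 \<le> K2"
    and m_pos: "0 < m" and K_nonneg: "0 \<le> K"
    and batch_size: "1 \<le> b" "b \<le> n"
    and step_size: "0 < \<eta>" "\<eta> * m \<le> 1" "\<eta> * K1\<^sup>2 \<le> m"
begin

definition stability_bound :: "real \<Rightarrow> real" where
  "stability_bound B =
     4 * D\<^sup>2 * K2\<^sup>2 * \<eta> * (8 * B + 2) / (real b * real n * m)
     + 4 * K2 * D * (1 + K1 * \<eta>) / (real n * m) * (1 + 5 * B) + 2 * K / m"

lemma stability_bound_nonneg: "0 \<le> B \<Longrightarrow> 0 \<le> stability_bound B"
  unfolding stability_bound_def using D_nonneg K1_nonneg K2_nonneg m_pos K_nonneg step_size(1)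
  by (intro add_nonneg_nonneg mult_nonneg_nonneg divide_nonneg_nonneg) simp_all

lemma minibatchesD:
  assumes "S \<in> minibatches n b"
  shows "S \<subseteq> {..<n}" "finite S" "card S = b"
  using assms batch_size(1) by (auto simp: minibatches_def intro: card_ge_0_finite)

lemma norm_batch_grad_le:
  assumes "S \<in> minibatches n b" and "\<And>i. i \<in> S \<Longrightarrow> norm (g t (xs i) - g t' (xs' i)) \<le> c i"
  shows "norm (batch_grad g xs b S t - batch_grad g xs' b S t') \<le> (\<Sum>i\<in>S. c i) / b"
proof -
  have "norm (batch_grad g xs b S t - batch_grad g xs' b S t') = norm (\<Sum>i\<in>S. g t (xs i) - g t' (xs' i)) / b"
    by (simp add: batch_grad_def sum_subtractf flip: scaleR_diff_right)
  also have "\<dots> \<le> (\<Sum>i\<in>S. c i) / b"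
    using assms(2) by (intro divide_right_mono order_trans[OF norm_sum sum_mono]) auto
  finally show ?thesis .
qed

lemma batch_grad_lipschitz:
  assumes "S \<in> minibatches n b" "\<And>i. i < n \<Longrightarrow> xs i \<in> X"
  shows "K1-lipschitz_on UNIV (batch_grad g xs b S)"
proof (rule lipschitz_onI)
  fix t t' :: 'a
  have "norm (g t (xs i) - g t' (xs i)) \<le> K1 * norm (t - t')" if "i \<in> S" for i
    using grad_lipschitz[of "xs i" "xs i" t t'] assms minibatchesD(1)[OF assms(1)] that by auto
  then have "norm (batch_grad g xs b S t - batch_grad g xs b S t') \<le> (\<Sum>i\<in>S. K1 * norm (t - t')) / b"
    by (rule norm_batch_grad_le[OF assms(1)])
  then show "dist (batch_grad g xs b S t) (batch_grad g xs b S t') \<le> K1 * dist t t'"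
    using minibatchesD(3)[OF assms(1)] batch_size(1) by (simp add: dist_norm)
qed (rule K1_nonneg)

lemma batch_grad_strongly_monotone:
  assumes "S \<in> minibatches n b" "\<And>i. i < n \<Longrightarrow> xs i \<in> X"
  shows "strongly_monotone_up_to m K (batch_grad g xs b S)"
  unfolding strongly_monotone_up_to_def
proof (intro allI)
  fix t t' :: 'a
  have "(\<Sum>i\<in>S. m * (norm (t - t'))\<^sup>2 - K) \<le> (\<Sum>i\<in>S. (g t (xs i) - g t' (xs i)) \<bullet> (t - t'))"
    using grad_strongly_monotone assms minibatchesD(1)[OF assms(1)]
    by (intro sum_mono) (auto simp: strongly_monotone_up_to_def)
  also have "\<dots> = (\<Sum>i\<in>S. g t (xs i) - g t' (xs i)) \<bullet> (t - t')"
    by (simp add: inner_sum_left)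
  also have "\<dots> = b * ((batch_grad g xs b S t - batch_grad g xs b S t') \<bullet> (t - t'))"
    using batch_size(1) by (simp add: batch_grad_def sum_subtractf flip: scaleR_diff_right)
  finally have "b * (m * (norm (t - t'))\<^sup>2 - K) \<le> b * ((batch_grad g xs b S t - batch_grad g xs b S t') \<bullet> (t - t'))"
    using minibatchesD(3)[OF assms(1)] by simp
  then show "m * (norm (t - t'))\<^sup>2 - K \<le> (batch_grad g xs b S t - batch_grad g xs b S t') \<bullet> (t - t')"
    using batch_size(1) by (simp add: mult_le_cancel_left_pos)
qed

lemma norm_batch_grad_zero_le:
  assumes "S \<in> minibatches n b" "\<And>i. i < n \<Longrightarrow> xs i \<in> X"
  shows "norm (batch_grad g xs b S 0) \<le> E"
proof -
  have "norm (\<Sum>i\<in>S. g 0 (xs i)) \<le> (\<Sum>i\<in>S. E)"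
    using norm_grad_zero_le assms minibatchesD(1)[OF assms(1)]
    by (intro order_trans[OF norm_sum sum_mono]) auto
  moreover have "norm (batch_grad g xs b S 0) = norm (\<Sum>i\<in>S. g 0 (xs i)) / b"
    by (simp add: batch_grad_def)
  ultimately show ?thesis
    using minibatchesD(3)[OF assms(1)] batch_size(1) by (simp add: divide_le_eq mult.commute)
qed

lemma norm_batch_grad_data_diff_le:
  assumes "S \<in> minibatches n b" "\<And>i. i < n \<Longrightarrow> xs i \<in> X" "\<And>i. i < n \<Longrightarrow> xs' i \<in> X"
  shows "norm (batch_grad g xs b S t - batch_grad g xs' b S t)
         \<le> card (S \<inter> {i. i < n \<and> xs i \<noteq> xs' i}) * (2 * D * K2 * (2 * norm t + 1)) / b"
proof -
  define J where "J = {i. i < n \<and> xs i \<noteq> xs' i}"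
  define \<epsilon> where "\<epsilon> = 2 * D * K2 * (2 * norm t + 1)"
  have "norm (g t (xs i) - g t (xs' i)) \<le> (if i \<in> J then \<epsilon> else 0)" if "i \<in> S" for i
  proof -
    have "i < n"
      using minibatchesD(1)[OF assms(1)] that by auto
    have "norm (xs i - xs' i) \<le> 2 * D"
      using norm_triangle_ineq4[of "xs i" "xs' i"] norm_data_le[OF assms(2)[OF \<open>i < n\<close>]]
        norm_data_le[OF assms(3)[OF \<open>i < n\<close>]] by linarith
    then have "K2 * norm (xs i - xs' i) * (2 * norm t + 1) \<le> K2 * (2 * D) * (2 * norm t + 1)"
      using K2_nonneg by (intro mult_right_mono mult_left_mono) auto
    also have "\<dots> = \<epsilon>"
      by (simp add: \<epsilon>_def mult_ac)
    finally have "K2 * norm (xs i - xs' i) * (2 * norm t + 1) \<le> \<epsilon>" .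
    moreover have "norm (g t (xs i) - g t (xs' i)) \<le> K2 * norm (xs i - xs' i) * (2 * norm t + 1)"
      using grad_lipschitz[OF assms(2,3)[OF \<open>i < n\<close>], of t t] by simp
    ultimately show ?thesis
      using \<open>i < n\<close> by (simp add: J_def)
  qed
  then have "norm (batch_grad g xs b S t - batch_grad g xs' b S t) \<le> (\<Sum>i\<in>S. if i \<in> J then \<epsilon> else 0) / b"
    by (rule norm_batch_grad_le[OF assms(1)])
  also have "(\<Sum>i\<in>S. if i \<in> J then \<epsilon> else 0) / b = card (S \<inter> J) * \<epsilon> / b"
    using minibatchesD(2)[OF assms(1)] by (simp add: sum.If_cases)
  finally show ?thesis
    by (simp only: J_def \<epsilon>_def)
qed

lemma norm_le_of_mem_sgd_law:
  assumes "\<And>i. i < n \<Longrightarrow> xs i \<in> X"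
    and "norm \<theta> \<le> M" "2 * K \<le> m * M\<^sup>2 - 2 * E * M" "\<eta> * E \<le> M"
  shows "t \<in> set_pmf (sgd_law g xs n b \<eta> \<theta> k) \<Longrightarrow> norm t \<le> M"
proof (induction k arbitrary: t)
  case 0
  then show ?case
    using assms(2) by simp
next
  case (Suc k)
  from Suc.prems obtain t0 S where t0: "t0 \<in> set_pmf (sgd_law g xs n b \<eta> \<theta> k)"
    and S: "S \<in> minibatches n b" and t: "t = sgd_step g xs b \<eta> S t0"
    unfolding sgd_law_Suc_sgd_step using finite_minibatches minibatches_nonempty[OF batch_size(2)]
    by (auto simp del: sgd_law.simps)
  show ?case
    unfolding t sgd_step_def
    using step_size
    by (intro gradient_step_norm_le[OF batch_grad_lipschitz[OF S assms(1)]
          batch_grad_strongly_monotone[OF S assms(1)] _ _ _ norm_batch_grad_zero_le[OF S assms(1)]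
          Suc.IH[OF t0] assms(3,4)]) simp_all
qed

lemma sgd_step_pair_dist_sq_le:
  fixes t t' :: 'a
  assumes S: "S \<in> minibatches n b"
    and xs: "\<And>i. i < n \<Longrightarrow> xs i \<in> X" and xs': "\<And>i. i < n \<Longrightarrow> xs' i \<in> X"
    and differ: "card {i. i < n \<and> xs i \<noteq> xs' i} \<le> 1"
  defines "\<epsilon> \<equiv> 2 * D * K2 * (2 * norm t' + 1)"
    and "\<rho> \<equiv> real (card (S \<inter> {i. i < n \<and> xs i \<noteq> xs' i}))"
  shows "(norm (sgd_step g xs b \<eta> S t - sgd_step g xs' b \<eta> S t'))\<^sup>2
         \<le> (1 - \<eta> * m) * (norm (t - t'))\<^sup>2 + 2 * \<eta> * K
           + (2 * \<eta> * (1 + \<eta> * K1) * norm (t - t') * \<epsilon> + \<eta>\<^sup>2 * \<epsilon>\<^sup>2 / b) * \<rho> / b"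
proof -
  define A where "A = sgd_step g xs b \<eta> S t - sgd_step g xs b \<eta> S t'"
  define e where "e = batch_grad g xs b S t' - batch_grad g xs' b S t'"
  have "\<rho> \<le> 1"
    using differ card_mono[of "{i. i < n \<and> xs i \<noteq> xs' i}" "S \<inter> {i. i < n \<and> xs i \<noteq> xs' i}"]
    by (simp add: \<rho>_def)
  have "0 \<le> \<epsilon>"
    using D_nonneg K2_nonneg by (simp add: \<epsilon>_def)
  have A_sq: "(norm A)\<^sup>2 \<le> (1 - \<eta> * m) * (norm (t - t'))\<^sup>2 + 2 * \<eta> * K"
    unfolding A_def sgd_step_def
    by (rule gradient_step_dist_sq_le[OF batch_grad_lipschitz[OF S xs] batch_grad_strongly_monotone[OF S xs]
          less_imp_le[OF step_size(1)] step_size(3)])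
  have A_le: "norm A \<le> (1 + \<eta> * K1) * norm (t - t')"
    unfolding A_def sgd_step_def
    by (rule gradient_step_dist_le[OF batch_grad_lipschitz[OF S xs] less_imp_le[OF step_size(1)]])
  have e_le: "norm e \<le> \<rho> * \<epsilon> / b"
    unfolding e_def \<epsilon>_def \<rho>_def
    by (rule norm_batch_grad_data_diff_le[where xs=xs and xs'=xs' and t=t', OF S xs xs'])
  have e_sq: "(norm e)\<^sup>2 \<le> \<rho> * \<epsilon>\<^sup>2 / b\<^sup>2"
  proof -
    have "(norm e)\<^sup>2 \<le> (\<rho> * \<epsilon> / b)\<^sup>2"
      using e_le by (simp add: power_mono)
    also have "\<dots> = \<rho> * \<rho> * \<epsilon>\<^sup>2 / b\<^sup>2"
      by (simp add: power_mult_distrib power_divide power2_eq_square)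
    also have "\<dots> \<le> \<rho> * \<epsilon>\<^sup>2 / b\<^sup>2"
      using mult_left_le[OF \<open>\<rho> \<le> 1\<close>, of \<rho>] by (intro divide_right_mono mult_right_mono) (simp_all add: \<rho>_def)
    finally show ?thesis .
  qed
  have "sgd_step g xs b \<eta> S t - sgd_step g xs' b \<eta> S t' = A - \<eta> *\<^sub>R e"
    by (simp add: A_def e_def sgd_step_def algebra_simps)
  then have "norm (sgd_step g xs b \<eta> S t - sgd_step g xs' b \<eta> S t') \<le> norm A + \<eta> * norm e"
    using norm_triangle_ineq4[of A "\<eta> *\<^sub>R e"] step_size(1) by simp
  then have "(norm (sgd_step g xs b \<eta> S t - sgd_step g xs' b \<eta> S t'))\<^sup>2 \<le> (norm A + \<eta> * norm e)\<^sup>2"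
    by (simp add: power_mono)
  also have "\<dots> = (norm A)\<^sup>2 + 2 * \<eta> * (norm A * norm e) + \<eta>\<^sup>2 * (norm e)\<^sup>2"
    by (simp add: power2_eq_square algebra_simps)
  also have "\<dots> \<le> ((1 - \<eta> * m) * (norm (t - t'))\<^sup>2 + 2 * \<eta> * K)
      + 2 * \<eta> * ((1 + \<eta> * K1) * norm (t - t') * (\<rho> * \<epsilon> / b)) + \<eta>\<^sup>2 * (\<rho> * \<epsilon>\<^sup>2 / b\<^sup>2)"
    using A_sq A_le e_le e_sq step_size(1) K1_nonneg \<open>0 \<le> \<epsilon>\<close>
    by (intro add_mono mult_left_mono mult_mono) (simp_all add: \<rho>_def)
  also have "\<dots> = (1 - \<eta> * m) * (norm (t - t'))\<^sup>2 + 2 * \<eta> * K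
           + (2 * \<eta> * (1 + \<eta> * K1) * norm (t - t') * \<epsilon> + \<eta>\<^sup>2 * \<epsilon>\<^sup>2 / b) * \<rho> / b"
    using batch_size(1) by (simp add: field_simps power2_eq_square)
  finally show ?thesis .
qed

lemma mean_sgd_step_pair_dist_sq_le:
  fixes t t' :: 'a
  assumes xs: "\<And>i. i < n \<Longrightarrow> xs i \<in> X" and xs': "\<And>i. i < n \<Longrightarrow> xs' i \<in> X"
    and differ: "card {i. i < n \<and> xs i \<noteq> xs' i} \<le> 1"
  defines "\<epsilon> \<equiv> 2 * D * K2 * (2 * norm t' + 1)"
  shows "(\<Sum>S\<in>minibatches n b. (norm (sgd_step g xs b \<eta> S t - sgd_step g xs' b \<eta> S t'))\<^sup>2)
           / card (minibatches n b)
         \<le> (1 - \<eta> * m) * (norm (t - t'))\<^sup>2 + 2 * \<eta> * K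
           + (2 * \<eta> * (1 + \<eta> * K1) * norm (t - t') * \<epsilon> + \<eta>\<^sup>2 * \<epsilon>\<^sup>2 / b) / n"
proof -
  define J where "J = {i. i < n \<and> xs i \<noteq> xs' i}"
  define \<alpha> where "\<alpha> = (1 - \<eta> * m) * (norm (t - t'))\<^sup>2 + 2 * \<eta> * K"
  define \<gamma> where "\<gamma> = 2 * \<eta> * (1 + \<eta> * K1) * norm (t - t') * \<epsilon> + \<eta>\<^sup>2 * \<epsilon>\<^sup>2 / b"
  define C where "C = real (card (minibatches n b))"
  have "0 < C"
    using finite_minibatches minibatches_nonempty[OF batch_size(2)] by (simp add: C_def card_gt_0_iff)
  have "0 < real n" "0 < real b"
    using batch_size by simp_all
  have "0 \<le> \<gamma>"
    using step_size(1) K1_nonneg D_nonneg K2_nonneg by (simp add: \<gamma>_def \<epsilon>_def)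
  have "real ((\<Sum>S\<in>minibatches n b. card (S \<inter> J)) * n) = real (b * card (minibatches n b) * card J)"
    using sum_card_Int_minibatches[of J n b] by (simp add: J_def subset_iff)
  then have "(\<Sum>S\<in>minibatches n b. real (card (S \<inter> J))) * n = b * C * card J"
    by (simp add: C_def)
  also have "\<dots> \<le> b * C"
    using differ \<open>0 < C\<close> by (intro mult_left_le) (simp_all add: J_def)
  finally have mean_overlap: "(\<Sum>S\<in>minibatches n b. real (card (S \<inter> J))) \<le> b * C / n"
    using \<open>0 < real n\<close> by (simp add: pos_le_divide_eq)
  have "(\<Sum>S\<in>minibatches n b. (norm (sgd_step g xs b \<eta> S t - sgd_step g xs' b \<eta> S t'))\<^sup>2)
        \<le> (\<Sum>S\<in>minibatches n b. \<alpha> + \<gamma> * real (card (S \<inter> J)) / b)"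
    using sgd_step_pair_dist_sq_le[OF _ xs xs' differ]
    by (intro sum_mono) (simp add: \<alpha>_def \<gamma>_def \<epsilon>_def J_def)
  also have "\<dots> = C * \<alpha> + \<gamma> * (\<Sum>S\<in>minibatches n b. real (card (S \<inter> J))) / b"
    by (simp add: sum.distrib sum_distrib_left sum_divide_distrib C_def)
  also have "\<dots> \<le> C * \<alpha> + \<gamma> * (b * C / n) / b"
    using mean_overlap \<open>0 \<le> \<gamma>\<close> by (intro add_left_mono divide_right_mono mult_left_mono) simp_all
  also have "\<dots> = C * (\<alpha> + \<gamma> / n)"
    using \<open>0 < real b\<close> by (simp add: field_simps)
  finally show ?thesis
    using \<open>0 < C\<close> by (simp add: \<alpha>_def \<gamma>_def C_def pos_divide_le_eq mult.commute)
qed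

lemma nn_integral_sgd_step_pair_dist_sq_le:
  fixes t t' :: 'a
  assumes xs: "\<And>i. i < n \<Longrightarrow> xs i \<in> X" and xs': "\<And>i. i < n \<Longrightarrow> xs' i \<in> X"
    and differ: "card {i. i < n \<and> xs i \<noteq> xs' i} \<le> 1"
    and "(norm t)\<^sup>2 \<le> B" "(norm t')\<^sup>2 \<le> B"
  shows "(\<integral>\<^sup>+ S. ennreal ((norm (sgd_step g xs b \<eta> S t - sgd_step g xs' b \<eta> S t'))\<^sup>2)
            \<partial>pmf_of_set (minibatches n b))
         \<le> ennreal ((1 - \<eta> * m) * (norm (t - t'))\<^sup>2 + \<eta> * m * stability_bound B)"
proof -
  define \<epsilon> where "\<epsilon> = 2 * D * K2 * (2 * norm t' + 1)"
  have "0 < real n" "0 < real b"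
    using batch_size by simp_all
  have "norm (t - t') * (2 * norm t' + 1) \<le> (norm t + norm t') * (2 * norm t' + 1)"
    by (intro mult_right_mono norm_triangle_ineq4) simp
  also have "\<dots> \<le> 1 + 5 * B"
    using quadratic_bounds_of_sq_le(1) assms(4,5) by simp
  finally have "norm (t - t') * \<epsilon> \<le> 2 * D * K2 * (1 + 5 * B)"
    using D_nonneg K2_nonneg unfolding \<epsilon>_def by (simp add: mult.left_commute mult_left_mono)
  then have "2 * \<eta> * (1 + \<eta> * K1) * (norm (t - t') * \<epsilon>) \<le> 2 * \<eta> * (1 + \<eta> * K1) * (2 * D * K2 * (1 + 5 * B))"
    by (rule mult_left_mono) (use step_size(1) K1_nonneg in simp)
  then have "2 * \<eta> * (1 + \<eta> * K1) * norm (t - t') * \<epsilon> \<le> 2 * \<eta> * (1 + \<eta> * K1) * (2 * D * K2 * (1 + 5 * B))"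
    by (simp only: mult.assoc)
  moreover have "\<epsilon>\<^sup>2 \<le> 4 * D\<^sup>2 * K2\<^sup>2 * (8 * B + 2)"
    using quadratic_bounds_of_sq_le(2)[OF norm_ge_zero norm_ge_zero assms(4,5)]
    by (simp add: \<epsilon>_def power_mult_distrib mult_left_mono)
  then have "\<eta>\<^sup>2 * \<epsilon>\<^sup>2 / b \<le> \<eta>\<^sup>2 * (4 * D\<^sup>2 * K2\<^sup>2 * (8 * B + 2)) / b"
    by (intro divide_right_mono mult_left_mono) simp_all
  ultimately have "(2 * \<eta> * (1 + \<eta> * K1) * norm (t - t') * \<epsilon> + \<eta>\<^sup>2 * \<epsilon>\<^sup>2 / b) / n
      \<le> (2 * \<eta> * (1 + \<eta> * K1) * (2 * D * K2 * (1 + 5 * B)) + \<eta>\<^sup>2 * (4 * D\<^sup>2 * K2\<^sup>2 * (8 * B + 2)) / b) / n"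
    by (intro divide_right_mono[OF add_mono]) simp_all
  moreover have "2 * \<eta> * K
      + (2 * \<eta> * (1 + \<eta> * K1) * (2 * D * K2 * (1 + 5 * B)) + \<eta>\<^sup>2 * (4 * D\<^sup>2 * K2\<^sup>2 * (8 * B + 2)) / b) / n
      = \<eta> * m * stability_bound B"
    using m_pos \<open>0 < real n\<close> \<open>0 < real b\<close>
    by (simp add: stability_bound_def field_simps power2_eq_square)
  ultimately have mean: "(1 - \<eta> * m) * (norm (t - t'))\<^sup>2 + 2 * \<eta> * K
      + (2 * \<eta> * (1 + \<eta> * K1) * norm (t - t') * \<epsilon> + \<eta>\<^sup>2 * \<epsilon>\<^sup>2 / b) / n
      \<le> (1 - \<eta> * m) * (norm (t - t'))\<^sup>2 + \<eta> * m * stability_bound B"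
    by linarith
  show ?thesis
    using mean_sgd_step_pair_dist_sq_le[OF xs xs' differ, of t t'] mean
    by (simp add: nn_integral_pmf_of_set_ennreal finite_minibatches minibatches_nonempty batch_size
        \<epsilon>_def ennreal_leI)
qed

lemma nn_integral_sgd_coupling_dist_sq_le:
  assumes xs: "\<And>i. i < n \<Longrightarrow> xs i \<in> X" and xs': "\<And>i. i < n \<Longrightarrow> xs' i \<in> X"
    and differ: "card {i. i < n \<and> xs i \<noteq> xs' i} \<le> 1"
    and radius: "norm \<theta> \<le> M" "2 * K \<le> m * M\<^sup>2 - 2 * E * M" "\<eta> * E \<le> M" and B: "M\<^sup>2 \<le> B"
  shows "(\<integral>\<^sup>+ z. ennreal ((norm (fst z - snd z))\<^sup>2) \<partial>sgd_coupling g xs xs' n b \<eta> \<theta> k)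
         \<le> ennreal ((1 - (1 - \<eta> * m) ^ k) * stability_bound B)"
proof -
  define a where "a k = (\<integral>\<^sup>+ z. ennreal ((norm (fst z - snd z))\<^sup>2) \<partial>sgd_coupling g xs xs' n b \<eta> \<theta> k)"
    for k
  have "0 \<le> stability_bound B"
    using B by (intro stability_bound_nonneg order_trans[OF zero_le_power2])
  have step: "(\<integral>\<^sup>+ S. ennreal ((norm (sgd_step g xs b \<eta> S (fst z) - sgd_step g xs' b \<eta> S (snd z)))\<^sup>2)
               \<partial>pmf_of_set (minibatches n b))
      \<le> ennreal ((1 - \<eta> * m) * (norm (fst z - snd z))\<^sup>2 + \<eta> * m * stability_bound B)"
    if "z \<in> set_pmf (sgd_coupling g xs xs' n b \<eta> \<theta> k)" for z k
  proof (rule nn_integral_sgd_step_pair_dist_sq_le[OF xs xs' differ])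
    have "fst z \<in> set_pmf (sgd_law g xs n b \<eta> \<theta> k)" "snd z \<in> set_pmf (sgd_law g xs' n b \<eta> \<theta> k)"
      using that by (metis image_eqI map_fst_sgd_coupling map_snd_sgd_coupling set_map_pmf)+
    then have "norm (fst z) \<le> M" "norm (snd z) \<le> M"
      using norm_le_of_mem_sgd_law[OF xs radius] norm_le_of_mem_sgd_law[OF xs' radius] by simp_all
    then show "(norm (fst z))\<^sup>2 \<le> B" "(norm (snd z))\<^sup>2 \<le> B"
      using B by (meson norm_ge_zero order_trans power_mono)+
  qed
  have "a (Suc k) \<le> ennreal (1 - \<eta> * m) * a k + ennreal ((1 - (1 - \<eta> * m)) * stability_bound B)" for k
  proof -
    have "a (Suc k) = (\<integral>\<^sup>+ z. (\<integral>\<^sup>+ S. ennreal ((norm (sgd_step g xs b \<eta> S (fst z)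
          - sgd_step g xs' b \<eta> S (snd z)))\<^sup>2) \<partial>pmf_of_set (minibatches n b)) \<partial>sgd_coupling g xs xs' n b \<eta> \<theta> k)"
      by (simp add: a_def)
    also have "\<dots> \<le> (\<integral>\<^sup>+ z. ennreal ((1 - \<eta> * m) * (norm (fst z - snd z))\<^sup>2 + \<eta> * m * stability_bound B)
        \<partial>sgd_coupling g xs xs' n b \<eta> \<theta> k)"
      using step by (intro nn_integral_mono_AE) (simp add: AE_measure_pmf_iff)
    also have "\<dots> = (\<integral>\<^sup>+ z. ennreal (1 - \<eta> * m) * ennreal ((norm (fst z - snd z))\<^sup>2)
        + ennreal (\<eta> * m * stability_bound B) \<partial>sgd_coupling g xs xs' n b \<eta> \<theta> k)"
      using step_size \<open>0 \<le> stability_bound B\<close> m_pos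
      by (intro nn_integral_cong) (simp add: ennreal_mult mult_nonneg_nonneg)
    also have "\<dots> = ennreal (1 - \<eta> * m) * a k + ennreal ((1 - (1 - \<eta> * m)) * stability_bound B)"
      by (simp add: a_def nn_integral_add nn_integral_cmult measure_pmf.emeasure_space_1)
    finally show ?thesis .
  qed
  then have "a k \<le> ennreal ((1 - (1 - \<eta> * m) ^ k) * stability_bound B)"
    using step_size m_pos \<open>0 \<le> stability_bound B\<close>
    by (intro ennreal_geometric_recurrence_le) (simp_all add: a_def)
  then show ?thesis
    by (simp add: a_def)
qed

theorem W2sq_sgd_law_le:
  assumes "\<And>i. i < n \<Longrightarrow> xs i \<in> X" "\<And>i. i < n \<Longrightarrow> xs' i \<in> X"
    and "card {i. i < n \<and> xs i \<noteq> xs' i} \<le> 1"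
    and "norm \<theta> \<le> M" "2 * K \<le> m * M\<^sup>2 - 2 * E * M" "\<eta> * E \<le> M" "M\<^sup>2 \<le> B"
  shows "W2sq (sgd_law g xs n b \<eta> \<theta> k) (sgd_law g xs' n b \<eta> \<theta> k)
         \<le> ennreal ((1 - (1 - \<eta> * m) ^ k) * stability_bound B)"
proof -
  have "W2sq (sgd_law g xs n b \<eta> \<theta> k) (sgd_law g xs' n b \<eta> \<theta> k)
        \<le> (\<integral>\<^sup>+ z. ennreal ((norm (fst z - snd z))\<^sup>2) \<partial>sgd_coupling g xs xs' n b \<eta> \<theta> k)"
    using W2sq_le_pmf_coupling[of "sgd_coupling g xs xs' n b \<eta> \<theta> k"]
    by (simp only: map_fst_sgd_coupling map_snd_sgd_coupling)
  also have "\<dots> \<le> ennreal ((1 - (1 - \<eta> * m) ^ k) * stability_bound B)"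
    by (rule nn_integral_sgd_coupling_dist_sq_le[OF assms])
  finally show ?thesis .
qed

end

theorem theorem4p1:
  fixes f :: "'a::euclidean_space \<Rightarrow> 'x::euclidean_space \<Rightarrow> real"
    and g :: "'a \<Rightarrow> 'x \<Rightarrow> 'a"
    and \<X> :: "'x set"
    and D E K1 K2 m K \<eta> :: real
    and n b :: nat
    and xs xs' :: "nat \<Rightarrow> 'x"
    and \<theta> :: 'a
  assumes grad: "\<And>t x. x \<in> \<X> \<Longrightarrow> ((\<lambda>s. f s x) has_derivative (\<lambda>h. g t x \<bullet> h)) (at t)"
    and D_bound: "\<And>x. x \<in> \<X> \<Longrightarrow> norm x \<le> D"
    and E_bound: "\<And>x. x \<in> \<X> \<Longrightarrow> norm (g 0 x) \<le> E"
    and K1_pos: "K1 > 0" and K2_pos: "K2 > 0"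
    and A1: "\<And>t t' x x'. x \<in> \<X> \<Longrightarrow> x' \<in> \<X> \<Longrightarrow>
               norm (g t x - g t' x') \<le> K1 * norm (t - t') + K2 * norm (x - x') * (norm t + norm t' + 1)"
    and m_pos: "m > 0" and K_pos: "K > 0"
    and A3: "\<And>t1 t2 x. x \<in> \<X> \<Longrightarrow> (g t1 x - g t2 x) \<bullet> (t1 - t2) \<ge> m * (norm (t1 - t2))\<^sup>2 - K"
    and xs_in: "\<And>i. i < n \<Longrightarrow> xs i \<in> \<X>"
    and xs'_in: "\<And>i. i < n \<Longrightarrow> xs' i \<in> \<X>"
    and differ: "card {i. i < n \<and> xs i \<noteq> xs' i} \<le> 1"
    and b_range: "1 \<le> b" "b \<le> n"
    and eta_pos: "\<eta> > 0"
    and eta_small: "\<eta> < min (1 / m) (m / (K1\<^sup>2 + 64 * D\<^sup>2 * K2\<^sup>2))"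
  shows "\<forall>k. let r = (E + sqrt (E\<^sup>2 + 4 * m * K)) / (2 * m);
               B = 4 * (norm \<theta>)\<^sup>2 + 4 * r\<^sup>2 + 4 - 2 * \<eta> / m * K1\<^sup>2
                   - 112 * \<eta> / m * D\<^sup>2 * K2\<^sup>2 + 128 * \<eta> / m * D\<^sup>2 * K2\<^sup>2 * r\<^sup>2
                   + 4 * K / m + 2 * r\<^sup>2
           in W2sq (measure_pmf (sgd_law g xs n b \<eta> \<theta> k)) (measure_pmf (sgd_law g xs' n b \<eta> \<theta> k))
              \<le> ennreal ((1 - (1 - \<eta> * m) ^ k) *
                   (4 * D\<^sup>2 * K2\<^sup>2 * \<eta> * (8 * B + 2) / (real b * real n * m)
                    + 4 * K2 * D * (1 + K1 * \<eta>) / (real n * m) * (1 + 5 * B)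
                    + 2 * K / m))"
proof -
  define r where "r = (E + sqrt (E\<^sup>2 + 4 * m * K)) / (2 * m)"
  define B where "B = 4 * (norm \<theta>)\<^sup>2 + 4 * r\<^sup>2 + 4 - 2 * \<eta> / m * K1\<^sup>2
                   - 112 * \<eta> / m * D\<^sup>2 * K2\<^sup>2 + 128 * \<eta> / m * D\<^sup>2 * K2\<^sup>2 * r\<^sup>2
                   + 4 * K / m + 2 * r\<^sup>2"
  define M where "M = max (norm \<theta>) (2 * r)"
  have "xs 0 \<in> \<X>"
    using xs_in b_range by simp
  then have "0 \<le> D" "0 \<le> E"
    using D_bound E_bound by (meson norm_ge_zero order_trans)+
  note \<eta> = step_size_bounds[OF eta_small m_pos K1_pos eta_pos]
  interpret sgd_stability g \<X> D E K1 K2 m K \<eta> n b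
    using A1 A3 D_bound E_bound K1_pos K2_pos m_pos K_pos b_range eta_pos \<eta> \<open>0 \<le> D\<close>
    by unfold_locales (auto simp: strongly_monotone_up_to_def)
  have "norm \<theta> \<le> M"
    by (simp add: M_def)
  have "2 * r = (E + sqrt (E\<^sup>2 + 4 * m * K)) / m"
    using m_pos by (simp add: r_def field_simps)
  then have "(E + sqrt (E\<^sup>2 + 4 * m * K)) / m \<le> M"
    by (simp add: M_def)
  note radius = radius_conditions_of_ge_root[OF m_pos less_imp_le[OF K_pos] \<open>0 \<le> E\<close>
      less_imp_le[OF eta_pos] \<eta>(1) this]
  have "M\<^sup>2 \<le> B"
    unfolding M_def B_def
    by (rule max_radius_sq_le[OF m_pos less_imp_le[OF K_pos] less_imp_le[OF eta_pos] \<eta>(2,3)])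
  have "W2sq (sgd_law g xs n b \<eta> \<theta> k) (sgd_law g xs' n b \<eta> \<theta> k)
      \<le> ennreal ((1 - (1 - \<eta> * m) ^ k) * stability_bound B)" for k
    by (rule W2sq_sgd_law_le[OF xs_in xs'_in differ \<open>norm \<theta> \<le> M\<close> radius \<open>M\<^sup>2 \<le> B\<close>])
  then show ?thesis
    unfolding Let_def stability_bound_def B_def r_def by blast
qed

end
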